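(* Let $\{GM_n\}$ be the Gaussian Tetranacci numbers and $\{GR_n\}$ the Gaussian Tetranacci-Lucas numbers. Then for every integer $n\ge3$: $$(4-i)GM_{2n}-(9-4i)GM_{2n-2}-(6-7i)GM_{2n-4}+(1+i)GM_{2n-6}=(1+i)GR_{2n-2}+(1-i)GR_{2n-4}-iGR_{2n-6},$$ $$(1+4i)GM_{2n}+(4-9i)GM_{2n-2}+(2-6i)GM_{2n-4}+(1+i)GM_{2n-6}=(1+i)GR_{2n-1}+(1-i)GR_{2n-3}-iGR_{2n-5},$$ $$(4-i)GM_{2n+1}-(9-4i)GM_{2n-1}-(6-7i)GM_{2n-3}+(1+i)GM_{2n-5}=GR_{2n}-(1-i)GR_{2n-2}-(1-i)GR_{2n-4},$$ $$(1+4i)GM_{2n+1}+(4-9i)GM_{2n-1}+(2-6i)GM_{2n-3}+(1+i)GM_{2n-5}=GR_{2n+1}-(1-i)GR_{2n-1}-(1-i)GR_{2n-3}.$$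
   Context: The Gaussian Tetranacci numbers: $GM_0=0$, $GM_1=1$, $GM_2=1+i$, $GM_3=2+i$, $GM_n=GM_{n-1}+GM_{n-2}+GM_{n-3}+GM_{n-4}$ for $n\ge4$. The Gaussian Tetranacci-Lucas numbers: $GR_0=4-i$, $GR_1=1+4i$, $GR_2=3+i$, $GR_3=7+3i$, $GR_n=GR_{n-1}+GR_{n-2}+GR_{n-3}+GR_{n-4}$ for $n\ge4$. *)

theory Defs
  imports Complex_Main
begin

fun GM :: "nat \<Rightarrow> complex" where
  "GM 0 = 0"
| "GM (Suc 0) = 1"
| "GM (Suc (Suc 0)) = 1 + \<i>"
| "GM (Suc (Suc (Suc 0))) = 2 + \<i>"
| "GM (Suc (Suc (Suc (Suc n)))) =
     GM (Suc (Suc (Suc n))) + GM (Suc (Suc n)) + GM (Suc n) + GM n"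

fun GR :: "nat \<Rightarrow> complex" where
  "GR 0 = 4 - \<i>"
| "GR (Suc 0) = 1 + 4 * \<i>"
| "GR (Suc (Suc 0)) = 3 + \<i>"
| "GR (Suc (Suc (Suc 0))) = 7 + 3 * \<i>"
| "GR (Suc (Suc (Suc (Suc n)))) =
     GR (Suc (Suc (Suc n))) + GR (Suc (Suc n)) + GR (Suc n) + GR n"

end

theory Submission
  imports Defs
begin

(* Solutions of the tetranacci recurrence form a module closed under index shifts, and such a
   solution is determined by its first four values. Writing 2n = k + 6, each identity compares
   two such solutions in k built from GM and GR, so it holds for every k once it is checked for
   k = 0, 1, 2, 3; the parity of the indices plays no role. *)

definition tetranacci :: "(nat \<Rightarrow> 'a::comm_ring) \<Rightarrow> bool" where
  "tetranacci f \<longleftrightarrow> (\<forall>k. f (k + 4) = f (k + 3) + f (k + 2) + f (k + 1) + f k)"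

lemma tetranacci_GM: "tetranacci GM"
  by (simp add: tetranacci_def numeral_eq_Suc)

lemma tetranacci_GR: "tetranacci GR"
  by (simp add: tetranacci_def numeral_eq_Suc)

lemma tetranacci_shift:
  assumes "tetranacci f"
  shows "tetranacci (\<lambda>k. f (k + m))"
proof -
  have "f (k + m + 4) = f (k + m + 3) + f (k + m + 2) + f (k + m + 1) + f (k + m)" for k
    using assms unfolding tetranacci_def by blast
  then show ?thesis
    unfolding tetranacci_def by (simp add: ac_simps)
qed

lemma tetranacci_mult: "tetranacci f \<Longrightarrow> tetranacci (\<lambda>k. c * f k)"
  by (simp add: tetranacci_def distrib_left)

lemma tetranacci_add:
  "tetranacci f \<Longrightarrow> tetranacci g \<Longrightarrow> tetranacci (\<lambda>k. f k + g k)"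
  by (simp add: tetranacci_def algebra_simps)

lemma tetranacci_diff:
  "tetranacci f \<Longrightarrow> tetranacci g \<Longrightarrow> tetranacci (\<lambda>k. f k - g k)"
  by (simp add: tetranacci_def algebra_simps)

lemma tetranacci_eqI:
  assumes "tetranacci f" "tetranacci g"
    and "f 0 = g 0" "f 1 = g 1" "f 2 = g 2" "f 3 = g 3"
  shows "f k = g k"
proof (induction k rule: less_induct)
  case (less k)
  show ?case
  proof (cases "k < 4")
    case True
    then have "k = 0 \<or> k = 1 \<or> k = 2 \<or> k = 3" by auto
    then show ?thesis using assms(3-6) by auto
  next
    case False
    then obtain j where k: "k = j + 4" by (metis add.commute le_Suc_ex not_less)
    have "f (j + 4) = f (j + 3) + f (j + 2) + f (j + 1) + f j"
      and "g (j + 4) = g (j + 3) + g (j + 2) + g (j + 1) + g j"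
      using assms(1,2) unfolding tetranacci_def by blast+
    moreover have below: "f (j + i) = g (j + i)" if "i < 4" for i
      using less.IH[of "j + i"] that k by simp
    ultimately show ?thesis
      using below[of 0] below[of 1] below[of 2] below[of 3] k by simp
  qed
qed

lemmas tetranacci_GM_GR_combination =
  tetranacci_add tetranacci_diff tetranacci_mult tetranacci_GM tetranacci_GR
  tetranacci_shift[OF tetranacci_GM] tetranacci_shift[OF tetranacci_GR]

lemma GM_GR_identity_1:
  "(4 - \<i>) * GM (k + 6) - (9 - 4*\<i>) * GM (k + 4) - (6 - 7*\<i>) * GM (k + 2) + (1 + \<i>) * GM k
   = (1 + \<i>) * GR (k + 4) + (1 - \<i>) * GR (k + 2) - \<i> * GR k"
  by (rule tetranacci_eqI; (intro tetranacci_GM_GR_combination)?;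
      simp add: numeral_eq_Suc complex_eq_iff)

lemma GM_GR_identity_2:
  "(1 + 4*\<i>) * GM (k + 6) + (4 - 9*\<i>) * GM (k + 4) + (2 - 6*\<i>) * GM (k + 2) + (1 + \<i>) * GM k
   = (1 + \<i>) * GR (k + 5) + (1 - \<i>) * GR (k + 3) - \<i> * GR (k + 1)"
  by (rule tetranacci_eqI; (intro tetranacci_GM_GR_combination)?;
      simp add: numeral_eq_Suc complex_eq_iff)

lemma GM_GR_identity_3:
  "(4 - \<i>) * GM (k + 7) - (9 - 4*\<i>) * GM (k + 5) - (6 - 7*\<i>) * GM (k + 3) + (1 + \<i>) * GM (k + 1)
   = GR (k + 6) - (1 - \<i>) * GR (k + 4) - (1 - \<i>) * GR (k + 2)"
  by (rule tetranacci_eqI; (intro tetranacci_GM_GR_combination)?;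
      simp add: numeral_eq_Suc complex_eq_iff)

lemma GM_GR_identity_4:
  "(1 + 4*\<i>) * GM (k + 7) + (4 - 9*\<i>) * GM (k + 5) + (2 - 6*\<i>) * GM (k + 3) + (1 + \<i>) * GM (k + 1)
   = GR (k + 7) - (1 - \<i>) * GR (k + 5) - (1 - \<i>) * GR (k + 3)"
  by (rule tetranacci_eqI; (intro tetranacci_GM_GR_combination)?;
      simp add: numeral_eq_Suc complex_eq_iff)

theorem mainTheorem19:
  fixes n :: nat
  assumes "n \<ge> 3"
  shows "((4 - \<i>) * GM (2*n) - (9 - 4*\<i>) * GM (2*n - 2) - (6 - 7*\<i>) * GM (2*n - 4)
           + (1 + \<i>) * GM (2*n - 6)
         = (1 + \<i>) * GR (2*n - 2) + (1 - \<i>) * GR (2*n - 4) - \<i> * GR (2*n - 6)) \<and>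
      ((1 + 4*\<i>) * GM (2*n) + (4 - 9*\<i>) * GM (2*n - 2) + (2 - 6*\<i>) * GM (2*n - 4)
           + (1 + \<i>) * GM (2*n - 6)
         = (1 + \<i>) * GR (2*n - 1) + (1 - \<i>) * GR (2*n - 3) - \<i> * GR (2*n - 5)) \<and>
      ((4 - \<i>) * GM (2*n + 1) - (9 - 4*\<i>) * GM (2*n - 1) - (6 - 7*\<i>) * GM (2*n - 3)
           + (1 + \<i>) * GM (2*n - 5)
         = GR (2*n) - (1 - \<i>) * GR (2*n - 2) - (1 - \<i>) * GR (2*n - 4)) \<and>
      ((1 + 4*\<i>) * GM (2*n + 1) + (4 - 9*\<i>) * GM (2*n - 1) + (2 - 6*\<i>) * GM (2*n - 3)
           + (1 + \<i>) * GM (2*n - 5)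
         = GR (2*n + 1) - (1 - \<i>) * GR (2*n - 1) - (1 - \<i>) * GR (2*n - 3))"
proof -
  obtain k where n: "2 * n = k + 6"
    using assms by (intro that[of "2 * n - 6"]) simp
  have shifts: "k + 6 - 2 = k + 4" "k + 6 - 4 = k + 2" "k + 6 - 6 = k" "k + 6 + 1 = k + 7"
    "k + 6 - 1 = k + 5" "k + 6 - 3 = k + 3" "k + 6 - 5 = k + 1"
    by simp_all
  show ?thesis
    unfolding n shifts
    using GM_GR_identity_1 GM_GR_identity_2 GM_GR_identity_3 GM_GR_identity_4 by blast
qed

end
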